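(* Let $\{R_i\}_{i\in I}$ be a family of commutative rings with identity and $R=\prod_{i\in I}R_i$. Then $R$ is nearly reduced if and only if each $R_i$ is nearly reduced.
   Context: For a ring $A$, $\mathfrak{N}(A)$ is the nilradical, $\mathrm{reg}(A)$ the set of regular elements (non-zero-divisors), and $\mathrm{areg}(A)=\{x\in A: x+\mathfrak{N}(A)\in\mathrm{reg}(A/\mathfrak{N}(A))\}$ (equivalently, $xa\in\mathfrak{N}(A)$ implies $a\in\mathfrak{N}(A)$). $A$ is nearly reduced if $\mathrm{reg}(A)=\mathrm{areg}(A)$ (equivalently, no nonzero element is annihilated by an element of $\mathrm{areg}(A)$). *)

theory Defs
  imports "HOL-Algebra.Ring"
begin

definition nilradical :: "('a, 'b) ring_scheme \<Rightarrow> 'a set" where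
  "nilradical A = {x \<in> carrier A. \<exists>n::nat. x [^]\<^bsub>A\<^esub> n = \<zero>\<^bsub>A\<^esub>}"

definition reg :: "('a, 'b) ring_scheme \<Rightarrow> 'a set" where
  "reg A = {x \<in> carrier A. \<forall>a \<in> carrier A. x \<otimes>\<^bsub>A\<^esub> a = \<zero>\<^bsub>A\<^esub> \<longrightarrow> a = \<zero>\<^bsub>A\<^esub>}"

definition areg :: "('a, 'b) ring_scheme \<Rightarrow> 'a set" where
  "areg A = {x \<in> carrier A. \<forall>a \<in> carrier A.
      x \<otimes>\<^bsub>A\<^esub> a \<in> nilradical A \<longrightarrow> a \<in> nilradical A}"

definition nearly_reduced :: "('a, 'b) ring_scheme \<Rightarrow> bool" where
  "nearly_reduced A \<longleftrightarrow> reg A = areg A"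

definition prod_ring :: "'i set \<Rightarrow> ('i \<Rightarrow> ('a, 'b) ring_scheme) \<Rightarrow> ('i \<Rightarrow> 'a) ring" where
  "prod_ring I R =
    \<lparr> carrier = (\<Pi>\<^sub>E i\<in>I. carrier (R i)),
      mult = (\<lambda>x y. \<lambda>i\<in>I. x i \<otimes>\<^bsub>R i\<^esub> y i),
      one = (\<lambda>i\<in>I. \<one>\<^bsub>R i\<^esub>),
      zero = (\<lambda>i\<in>I. \<zero>\<^bsub>R i\<^esub>),
      add = (\<lambda>x y. \<lambda>i\<in>I. x i \<oplus>\<^bsub>R i\<^esub> y i) \<rparr>"

end

theory Submission
  imports Defs
begin

text \<open>In a commutative ring every regular element is almost regular, so being nearly reduced
  means that every almost regular element is regular. In the product, regularity is checked
  coordinatewise. Almost regularity is not obviously coordinatewise, because a nilpotent element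
  of an infinite product needs one nilpotency index for all coordinates; two weaker facts suffice.
  A coordinate of an almost regular element is almost regular: test it against elements supported
  in that single coordinate. Conversely, an almost regular \<open>y\<close> in \<open>R j\<close>, padded with \<open>\<one>\<close> in
  all other coordinates, is almost regular in the product: if its product with \<open>a\<close> is nilpotent
  of index \<open>n\<close>, then \<open>a k\<^sup>n = \<zero>\<close> for \<open>k \<noteq> j\<close> and \<open>a j\<close> is nilpotent, so \<open>a\<close> is nilpotent.\<close>

lemma (in ring) nat_pow_eq_zero_mono:
  assumes "x \<in> carrier R" "x [^] (n::nat) = \<zero>" "n \<le> m"
  shows "x [^] m = \<zero>"
proof -
  obtain k where "m = n + k" using \<open>n \<le> m\<close> le_Suc_ex by blast
  then have "x [^] m = x [^] n \<otimes> x [^] k" using assms(1) by (simp add: nat_pow_mult)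
  then show ?thesis using assms(1,2) by simp
qed

lemma (in ring) reg_mult:
  assumes "x \<in> reg R" "y \<in> reg R"
  shows "x \<otimes> y \<in> reg R"
proof -
  have x: "x \<in> carrier R" and y: "y \<in> carrier R" using assms by (simp_all add: reg_def)
  show ?thesis unfolding reg_def
  proof (intro CollectI conjI ballI impI m_closed x y)
    fix a assume a: "a \<in> carrier R" and "x \<otimes> y \<otimes> a = \<zero>"
    then have "x \<otimes> (y \<otimes> a) = \<zero>" using x y by (simp add: m_assoc)
    then have "y \<otimes> a = \<zero>" using assms(1) a y by (simp add: reg_def)
    then show "a = \<zero>" using assms(2) a by (simp add: reg_def)
  qed
qed

lemma (in ring) nat_pow_reg:
  assumes "x \<in> reg R"
  shows "x [^] (n::nat) \<in> reg R"
proof (induction n)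
  case 0
  show ?case by (simp add: reg_def)
next
  case (Suc n)
  then show ?case using assms by (simp add: reg_mult)
qed

lemma (in cring) reg_subset_areg: "reg R \<subseteq> areg R"
proof
  fix x assume x: "x \<in> reg R"
  then have x_carrier: "x \<in> carrier R" by (simp add: reg_def)
  show "x \<in> areg R" unfolding areg_def
  proof (intro CollectI conjI ballI impI x_carrier)
    fix a assume a: "a \<in> carrier R" and "x \<otimes> a \<in> nilradical R"
    then obtain n :: nat where "(x \<otimes> a) [^] n = \<zero>" by (auto simp: nilradical_def)
    then have "x [^] n \<otimes> a [^] n = \<zero>" using x_carrier a by (simp add: pow_mult_distrib m_comm)
    then have "a [^] n = \<zero>" using nat_pow_reg[OF x] a by (simp add: reg_def)
    then show "a \<in> nilradical R" using a by (auto simp: nilradical_def)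
  qed
qed

lemma (in cring) nearly_reduced_iff_areg_subset_reg:
  "nearly_reduced R \<longleftrightarrow> areg R \<subseteq> reg R"
  using reg_subset_areg unfolding nearly_reduced_def by blast

lemma prod_ring_carrier_apply:
  "x \<in> carrier (prod_ring I R) \<Longrightarrow> i \<in> I \<Longrightarrow> x i \<in> carrier (R i)"
  by (auto simp: prod_ring_def)

lemma prod_ring_mult_apply:
  "i \<in> I \<Longrightarrow> (x \<otimes>\<^bsub>prod_ring I R\<^esub> y) i = x i \<otimes>\<^bsub>R i\<^esub> y i"
  by (simp add: prod_ring_def)

lemma nat_pow_prod_ring:
  "x [^]\<^bsub>prod_ring I R\<^esub> (n::nat) = (\<lambda>i\<in>I. x i [^]\<^bsub>R i\<^esub> n)"
  by (induction n) (simp_all add: prod_ring_def fun_eq_iff)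

lemma nilradical_prod_ring_iff:
  "a \<in> nilradical (prod_ring I R) \<longleftrightarrow>
     a \<in> carrier (prod_ring I R) \<and> (\<exists>n::nat. \<forall>i\<in>I. a i [^]\<^bsub>R i\<^esub> n = \<zero>\<^bsub>R i\<^esub>)"
  unfolding nilradical_def nat_pow_prod_ring
  by (auto simp: prod_ring_def restrict_def fun_eq_iff; metis)

lemma cring_prod_ring:
  assumes crings: "\<And>i. i \<in> I \<Longrightarrow> cring (R i)"
  shows "cring (prod_ring I R)"
proof -
  have rings: "ring (R i)" if "i \<in> I" for i using crings[OF that] cring.axioms(1) by blast
  note [simp] = prod_ring_def fun_eq_iff PiE_iff extensional_def
    ring.ring_simprules[OF rings] monoid.r_one[OF ring.is_monoid[OF rings]]
  have "abelian_group (prod_ring I R)"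
  proof (rule abelian_groupI)
    fix x assume "x \<in> carrier (prod_ring I R)"
    then show "\<exists>y \<in> carrier (prod_ring I R). y \<oplus>\<^bsub>prod_ring I R\<^esub> x = \<zero>\<^bsub>prod_ring I R\<^esub>"
      by (intro bexI[of _ "\<lambda>i\<in>I. \<ominus>\<^bsub>R i\<^esub> x i"]) auto
  qed auto
  moreover have "comm_monoid (prod_ring I R)"
    by (rule comm_monoidI) (auto simp: cring.cring_simprules[OF crings])
  ultimately show ?thesis by (rule cringI) auto
qed

definition prod_ring_single :: "'i set \<Rightarrow> ('i \<Rightarrow> ('a, 'b) ring_scheme) \<Rightarrow> 'i \<Rightarrow> 'a \<Rightarrow> 'i \<Rightarrow> 'a"
  where "prod_ring_single I R i c = (\<lambda>k\<in>I. if k = i then c else \<zero>\<^bsub>R k\<^esub>)"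

lemma prod_ring_single_eq_zero_iff:
  "i \<in> I \<Longrightarrow> prod_ring_single I R i c = \<zero>\<^bsub>prod_ring I R\<^esub> \<longleftrightarrow> c = \<zero>\<^bsub>R i\<^esub>"
  by (auto simp: prod_ring_single_def prod_ring_def fun_eq_iff)

locale ring_family =
  fixes I :: "'i set" and R :: "'i \<Rightarrow> ('a, 'b) ring_scheme"
  assumes ring_member: "i \<in> I \<Longrightarrow> ring (R i)"
begin

lemma prod_ring_single_in_carrier:
  assumes "c \<in> carrier (R i)"
  shows "prod_ring_single I R i c \<in> carrier (prod_ring I R)"
  using assms by (auto simp: prod_ring_single_def prod_ring_def ring.ring_simprules[OF ring_member])

lemma mult_prod_ring_single:
  assumes "x \<in> carrier (prod_ring I R)" "i \<in> I"
  shows "x \<otimes>\<^bsub>prod_ring I R\<^esub> prod_ring_single I R i c = prod_ring_single I R i (x i \<otimes>\<^bsub>R i\<^esub> c)"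
proof -
  have "x k \<otimes>\<^bsub>R k\<^esub> \<zero>\<^bsub>R k\<^esub> = \<zero>\<^bsub>R k\<^esub>" if "k \<in> I" for k
  proof -
    interpret ring "R k" using ring_member[OF that] .
    show ?thesis using prod_ring_carrier_apply[OF assms(1) that] by simp
  qed
  then show ?thesis by (auto simp: prod_ring_single_def prod_ring_def)
qed

lemma prod_ring_single_in_nilradical_iff:
  assumes i: "i \<in> I" and c: "c \<in> carrier (R i)"
  shows "prod_ring_single I R i c \<in> nilradical (prod_ring I R) \<longleftrightarrow> c \<in> nilradical (R i)"
proof
  assume "prod_ring_single I R i c \<in> nilradical (prod_ring I R)"
  then obtain n :: nat where "\<forall>k\<in>I. prod_ring_single I R i c k [^]\<^bsub>R k\<^esub> n = \<zero>\<^bsub>R k\<^esub>"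
    by (auto simp: nilradical_prod_ring_iff)
  then show "c \<in> nilradical (R i)" using i c by (force simp: nilradical_def prod_ring_single_def)
next
  assume "c \<in> nilradical (R i)"
  then obtain n :: nat where n: "c [^]\<^bsub>R i\<^esub> n = \<zero>\<^bsub>R i\<^esub>" by (auto simp: nilradical_def)
  \<comment> \<open>The zero coordinates need a positive exponent, since \<open>\<zero> [^] 0 = \<one>\<close>.\<close>
  have "c [^]\<^bsub>R i\<^esub> Suc n = \<zero>\<^bsub>R i\<^esub>"
    by (rule ring.nat_pow_eq_zero_mono[OF ring_member[OF i] c n]) simp
  moreover have "\<zero>\<^bsub>R k\<^esub> [^]\<^bsub>R k\<^esub> Suc n = \<zero>\<^bsub>R k\<^esub>" if "k \<in> I" for k
  proof -
    interpret ring "R k" using ring_member[OF that] .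
    show ?thesis by (simp add: nat_pow_zero)
  qed
  ultimately have "\<forall>k\<in>I. prod_ring_single I R i c k [^]\<^bsub>R k\<^esub> Suc n = \<zero>\<^bsub>R k\<^esub>"
    by (simp add: prod_ring_single_def)
  then show "prod_ring_single I R i c \<in> nilradical (prod_ring I R)"
    unfolding nilradical_prod_ring_iff using prod_ring_single_in_carrier[OF c] by blast
qed

lemma reg_prod_ring_iff:
  "x \<in> reg (prod_ring I R) \<longleftrightarrow> x \<in> carrier (prod_ring I R) \<and> (\<forall>i\<in>I. x i \<in> reg (R i))"
proof (intro iffI conjI ballI; (elim conjE)?)
  assume x: "x \<in> reg (prod_ring I R)"
  then show x_carrier: "x \<in> carrier (prod_ring I R)" by (simp add: reg_def)
  fix i assume i: "i \<in> I"
  show "x i \<in> reg (R i)" unfolding reg_def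
  proof (intro CollectI conjI ballI impI prod_ring_carrier_apply[OF x_carrier i])
    fix b assume b: "b \<in> carrier (R i)" "x i \<otimes>\<^bsub>R i\<^esub> b = \<zero>\<^bsub>R i\<^esub>"
    then have "x \<otimes>\<^bsub>prod_ring I R\<^esub> prod_ring_single I R i b = \<zero>\<^bsub>prod_ring I R\<^esub>"
      by (simp add: mult_prod_ring_single[OF x_carrier i] prod_ring_single_eq_zero_iff[OF i])
    then have "prod_ring_single I R i b = \<zero>\<^bsub>prod_ring I R\<^esub>"
      using x prod_ring_single_in_carrier[OF b(1)] by (simp add: reg_def)
    then show "b = \<zero>\<^bsub>R i\<^esub>" by (simp add: prod_ring_single_eq_zero_iff[OF i])
  qed
next
  assume x_carrier: "x \<in> carrier (prod_ring I R)" and x: "\<forall>i\<in>I. x i \<in> reg (R i)"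
  show "x \<in> reg (prod_ring I R)" unfolding reg_def
  proof (intro CollectI conjI ballI impI x_carrier)
    fix a assume a: "a \<in> carrier (prod_ring I R)"
      and xa: "x \<otimes>\<^bsub>prod_ring I R\<^esub> a = \<zero>\<^bsub>prod_ring I R\<^esub>"
    have "a i = \<zero>\<^bsub>R i\<^esub>" if i: "i \<in> I" for i
    proof -
      have "x i \<otimes>\<^bsub>R i\<^esub> a i = \<zero>\<^bsub>R i\<^esub>"
        using arg_cong[OF xa, of "\<lambda>f. f i"] i by (simp add: prod_ring_mult_apply prod_ring_def)
      then show ?thesis using x i prod_ring_carrier_apply[OF a i] by (auto simp: reg_def)
    qed
    then show "a = \<zero>\<^bsub>prod_ring I R\<^esub>"
      using a by (auto simp: prod_ring_def fun_eq_iff PiE_def extensional_def)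
  qed
qed

lemma areg_prod_ring_component:
  assumes x: "x \<in> areg (prod_ring I R)" and i: "i \<in> I"
  shows "x i \<in> areg (R i)"
proof -
  have x_carrier: "x \<in> carrier (prod_ring I R)" using x by (simp add: areg_def)
  interpret ring "R i" using ring_member[OF i] .
  show ?thesis unfolding areg_def
  proof (intro CollectI conjI ballI impI prod_ring_carrier_apply[OF x_carrier i])
    fix b assume b: "b \<in> carrier (R i)" "x i \<otimes>\<^bsub>R i\<^esub> b \<in> nilradical (R i)"
    have "x i \<otimes>\<^bsub>R i\<^esub> b \<in> carrier (R i)" using prod_ring_carrier_apply[OF x_carrier i] b(1) by simp
    then have "x \<otimes>\<^bsub>prod_ring I R\<^esub> prod_ring_single I R i b \<in> nilradical (prod_ring I R)"
      using b(2) by (simp add: mult_prod_ring_single[OF x_carrier i] prod_ring_single_in_nilradical_iff[OF i])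
    then have "prod_ring_single I R i b \<in> nilradical (prod_ring I R)"
      using x prod_ring_single_in_carrier[OF b(1)] by (simp add: areg_def)
    then show "b \<in> nilradical (R i)" by (simp add: prod_ring_single_in_nilradical_iff[OF i b(1)])
  qed
qed

lemma areg_prod_ring_pad_one:
  assumes j: "j \<in> I" and y: "y \<in> areg (R j)"
  shows "(\<lambda>k\<in>I. if k = j then y else \<one>\<^bsub>R k\<^esub>) \<in> areg (prod_ring I R)"
    (is "?x \<in> _")
proof -
  have y_carrier: "y \<in> carrier (R j)" using y by (simp add: areg_def)
  have x_carrier: "?x \<in> carrier (prod_ring I R)"
    using y_carrier by (auto simp: prod_ring_def ring.ring_simprules[OF ring_member])
  show ?thesis unfolding areg_def
  proof (intro CollectI conjI ballI impI x_carrier)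
    fix a assume a: "a \<in> carrier (prod_ring I R)" "?x \<otimes>\<^bsub>prod_ring I R\<^esub> a \<in> nilradical (prod_ring I R)"
    note a_carrier = prod_ring_carrier_apply[OF a(1)]
    obtain n :: nat where n: "\<forall>k\<in>I. (?x k \<otimes>\<^bsub>R k\<^esub> a k) [^]\<^bsub>R k\<^esub> n = \<zero>\<^bsub>R k\<^esub>"
      using a(2) by (auto simp: nilradical_prod_ring_iff prod_ring_mult_apply)
    have "(y \<otimes>\<^bsub>R j\<^esub> a j) [^]\<^bsub>R j\<^esub> n = \<zero>\<^bsub>R j\<^esub>" using bspec[OF n j] j by simp
    moreover have "y \<otimes>\<^bsub>R j\<^esub> a j \<in> carrier (R j)"
      using a_carrier[OF j] y_carrier by (simp add: ring.ring_simprules[OF ring_member[OF j]])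
    ultimately have "y \<otimes>\<^bsub>R j\<^esub> a j \<in> nilradical (R j)" by (auto simp: nilradical_def)
    then have "a j \<in> nilradical (R j)" using y a_carrier[OF j] by (simp add: areg_def)
    then obtain m :: nat where m: "a j [^]\<^bsub>R j\<^esub> m = \<zero>\<^bsub>R j\<^esub>" by (auto simp: nilradical_def)
    have "a k [^]\<^bsub>R k\<^esub> (n + m) = \<zero>\<^bsub>R k\<^esub>" if k: "k \<in> I" for k
    proof (cases "k = j")
      case True
      then show ?thesis
        using ring.nat_pow_eq_zero_mono[OF ring_member[OF j] a_carrier[OF j] m] by simp
    next
      case False
      interpret ring "R k" using ring_member[OF k] .
      have "a k [^]\<^bsub>R k\<^esub> n = \<zero>\<^bsub>R k\<^esub>" using n k a_carrier[OF k] False by auto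
      then show ?thesis using nat_pow_eq_zero_mono a_carrier[OF k] by simp
    qed
    then show "a \<in> nilradical (prod_ring I R)" using a(1) by (auto simp: nilradical_prod_ring_iff)
  qed
qed

lemma areg_subset_reg_factor:
  assumes prod: "areg (prod_ring I R) \<subseteq> reg (prod_ring I R)" and j: "j \<in> I"
  shows "areg (R j) \<subseteq> reg (R j)"
proof
  fix y assume "y \<in> areg (R j)"
  then have "(\<lambda>k\<in>I. if k = j then y else \<one>\<^bsub>R k\<^esub>) \<in> reg (prod_ring I R)"
    using areg_prod_ring_pad_one[OF j] prod by blast
  then have "\<forall>i\<in>I. (if i = j then y else \<one>\<^bsub>R i\<^esub>) \<in> reg (R i)"
    by (simp add: reg_prod_ring_iff)
  from bspec[OF this j] show "y \<in> reg (R j)" by simp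
qed

lemma areg_subset_reg_prod:
  assumes factors: "\<And>i. i \<in> I \<Longrightarrow> areg (R i) \<subseteq> reg (R i)"
  shows "areg (prod_ring I R) \<subseteq> reg (prod_ring I R)"
proof
  fix x assume x: "x \<in> areg (prod_ring I R)"
  have "x i \<in> reg (R i)" if "i \<in> I" for i
    using areg_prod_ring_component[OF x that] factors[OF that] by blast
  moreover have "x \<in> carrier (prod_ring I R)" using x by (simp add: areg_def)
  ultimately show "x \<in> reg (prod_ring I R)" by (simp add: reg_prod_ring_iff)
qed

end

theorem mainTheorem8:
  fixes I :: "'i set" and R :: "'i \<Rightarrow> ('a, 'b) ring_scheme"
  assumes "\<And>i. i \<in> I \<Longrightarrow> cring (R i)"
  shows "nearly_reduced (prod_ring I R) \<longleftrightarrow> (\<forall>i\<in>I. nearly_reduced (R i))"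
proof -
  interpret ring_family I R by (intro ring_family.intro cring.axioms(1) assms)
  have "cring (prod_ring I R)" using assms by (rule cring_prod_ring)
  then have prod_iff: "nearly_reduced (prod_ring I R) \<longleftrightarrow> areg (prod_ring I R) \<subseteq> reg (prod_ring I R)"
    by (rule cring.nearly_reduced_iff_areg_subset_reg)
  have factor_iff: "nearly_reduced (R i) \<longleftrightarrow> areg (R i) \<subseteq> reg (R i)" if "i \<in> I" for i
    using assms[OF that] by (rule cring.nearly_reduced_iff_areg_subset_reg)
  show ?thesis
    using areg_subset_reg_factor areg_subset_reg_prod by (auto simp: prod_iff factor_iff)
qed

end
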